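(* Let $\mathcal A\subset\mathbb R^d$ be a finite nonempty set, $\mathcal D=\mathrm{conv}(\mathcal A)$, and let $f$ be convex and differentiable on an open set containing the Minkowski set $\mathcal D+\mathcal D-\mathcal D=\{x+s-v: x,s,v\in\mathcal D\}$, with $C_f^{A}<\infty$. Run the away-steps Frank-Wolfe algorithm (AFW) described in the context, and let $h_t:=f(x^{(t)})-\min_{x\in\mathcal D}f(x)$. Then: (i) at every good step $t$ (i.e. $\gamma_t<\gamma_{\max}$) one has $h_{t+1}\le(1-\rho_f)h_t$ with $\rho_f:=\mu_f^{A}/(4C_f^{A})$, and $h_{t+1}\le h_t$ at every step; (ii) the number of drop steps (away steps with $\gamma_t=\gamma_{\max}$) among iterations $0,\dots,t-1$ is at most $t/2$; (iii) consequently $h_t\le h_0\exp(-\tfrac12\rho_f t)$ for all $t\ge 0$; (iv) if only $\mu_f^{A}\ge 0$ is known (general convex case), then $h_t\le \frac{4C}{k(t)+4}$ with $C=2C_f^{A}+h_0$, where $k(t)\ge t/2$ is the number of steps among iterations $0,\dots,t-1$ that are not drop steps.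
   Context: All norms and inner products are Euclidean. For $x\in\mathcal D$, let $\mathcal S_x$ be the family of subsets $S\subseteq\mathcal A$ such that $x$ is a proper convex combination of all elements of $S$ (i.e. $x=\sum_{v\in S}\alpha_v v$ with all $\alpha_v>0$, $\sum\alpha_v=1$). Curvature constant: $C_f^{A}:=\sup\{\frac{2}{\gamma^2}(f(y)-f(x)-\gamma\langle\nabla f(x),s-v\rangle): x,s,v\in\mathcal D,\ \gamma\in(0,1],\ y=x+\gamma(s-v)\}$. Geometric strong convexity: for $x\in\mathcal D$ let $s_f(x)\in\arg\min_{a\in\mathcal A}\langle\nabla f(x),a\rangle$; for $S\in\mathcal S_x$ let $v_S(x)\in\arg\max_{v\in S}\langle\nabla f(x),v\rangle$; let $v_f(x)$ be an element of $\{v_S(x):S\in\mathcal S_x\}$ minimizing $\langle\nabla f(x),\cdot\rangle$. For $x,x^*\in\mathcal D$ with $\langle\nabla f(x),x^*-x\rangle<0$ put $\gamma^{A}(x,x^* ):=\frac{\langle-\nabla f(x),x^*-x\rangle}{\langle-\nabla f(x),s_f(x)-v_f(x)\rangle}$, and $\mu_f^{A}:=\inf_{x\in\mathcal D}\inf_{x^*\in\mathcal D:\langle\nabla f(x),x^*-x\rangle<0}\frac{2}{\gamma^{A}(x,x^* )^2}\big(f(x^* )-f(x)-\langle\nabla f(x),x^*-x\rangle\big)$. AFW algorithm: start with $x^{(0)}\in\mathcal A$, $S^{(0)}=\{x^{(0)}\}$, weight $\alpha^{(0)}_{x^{(0)}}=1$. At iteration $t$, $x^{(t)}=\sum_{v\in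 S^{(t)}}\alpha^{(t)}_v v$ with $\alpha^{(t)}_v>0$ summing to 1. Let $s_t\in\arg\min_{a\in\mathcal A}\langle\nabla f(x^{(t)}),a\rangle$, $d^{FW}_t=s_t-x^{(t)}$, $v_t\in\arg\max_{v\in S^{(t)}}\langle\nabla f(x^{(t)}),v\rangle$, $d^{A}_t=x^{(t)}-v_t$. If $\langle-\nabla f(x^{(t)}),d^{FW}_t\rangle\ge\langle-\nabla f(x^{(t)}),d^{A}_t\rangle$ take $d_t=d^{FW}_t$, $\gamma_{\max}=1$ (FW step); otherwise $d_t=d^{A}_t$, $\gamma_{\max}=\alpha^{(t)}_{v_t}/(1-\alpha^{(t)}_{v_t})$ (away step). Let $\gamma_t\in\arg\min_{\gamma\in[0,\gamma_{\max}]}f(x^{(t)}+\gamma d_t)$ and $x^{(t+1)}=x^{(t)}+\gamma_t d_t$. Weights: for a FW step $\alpha^{(t+1)}_{s_t}=(1-\gamma_t)\alpha^{(t)}_{s_t}+\gamma_t$ and $\alpha^{(t+1)}_v=(1-\gamma_t)\alpha^{(t)}_v$ for $v\ne s_t$; for an away step $\alpha^{(t+1)}_{v_t}=(1+\gamma_t)\alpha^{(t)}_{v_t}-\gamma_t$ and $\alpha^{(t+1)}_v=(1+\gamma_t)\alpha^{(t)}_v$ for $v\neq v_t$ (weights of atoms not previously active are $0$). $S^{(t+1)}=\{v\in\mathcal A:\alpha^{(t+1)}_v>0\}$. A step is good if $\gamma_t<\gamma_{\max}$. *)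

theory Defs
  imports "HOL-Analysis.Analysis"
begin

definition proper_comb :: "'a::real_vector set \<Rightarrow> 'a \<Rightarrow> bool" where
  "proper_comb S x \<longleftrightarrow>
     (\<exists>\<alpha>. (\<forall>u\<in>S. \<alpha> u > 0) \<and> sum \<alpha> S = 1 \<and> (\<Sum>u\<in>S. \<alpha> u *\<^sub>R u) = x)"

definition supp_sets :: "'a::real_vector set \<Rightarrow> 'a \<Rightarrow> 'a set set" where
  "supp_sets A x = {S. S \<subseteq> A \<and> proper_comb S x}"

definition minkowski3 :: "'a::real_vector set \<Rightarrow> 'a set" where
  "minkowski3 D = {y + z - w | y z w. y \<in> D \<and> z \<in> D \<and> w \<in> D}"

definition curv_vals :: "('a::real_inner \<Rightarrow> real) \<Rightarrow> ('a \<Rightarrow> 'a) \<Rightarrow> 'a set \<Rightarrow> real set" where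
  "curv_vals f g D =
     {2 / \<gamma>^2 * (f (x + \<gamma> *\<^sub>R (s - v)) - f x - \<gamma> * (g x \<bullet> (s - v))) | x s v \<gamma>.
        x \<in> D \<and> s \<in> D \<and> v \<in> D \<and> 0 < \<gamma> \<and> \<gamma> \<le> 1}"

definition curv_const :: "('a::real_inner \<Rightarrow> real) \<Rightarrow> ('a \<Rightarrow> 'a) \<Rightarrow> 'a set \<Rightarrow> real" where
  "curv_const f g D = Sup (curv_vals f g D)"

definition fw_atom :: "('a::real_inner \<Rightarrow> 'a) \<Rightarrow> 'a set \<Rightarrow> 'a \<Rightarrow> 'a" where
  "fw_atom g A x = (SOME a. a \<in> A \<and> (\<forall>b\<in>A. g x \<bullet> a \<le> g x \<bullet> b))"

definition away_atom :: "('a::real_inner \<Rightarrow> 'a) \<Rightarrow> 'a set \<Rightarrow> 'a \<Rightarrow> 'a" where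
  "away_atom g S x = (SOME v. v \<in> S \<and> (\<forall>u\<in>S. g x \<bullet> u \<le> g x \<bullet> v))"

definition pw_away_atom :: "('a::real_inner \<Rightarrow> 'a) \<Rightarrow> 'a set \<Rightarrow> 'a \<Rightarrow> 'a" where
  "pw_away_atom g A x =
     (let V = (\<lambda>S. away_atom g S x) ` supp_sets A x
      in SOME v. v \<in> V \<and> (\<forall>u\<in>V. g x \<bullet> v \<le> g x \<bullet> u))"

definition gammaA :: "('a::real_inner \<Rightarrow> 'a) \<Rightarrow> 'a set \<Rightarrow> 'a \<Rightarrow> 'a \<Rightarrow> real" where
  "gammaA g A x xs =
     ((- g x) \<bullet> (xs - x)) / ((- g x) \<bullet> (fw_atom g A x - pw_away_atom g A x))"

definition mu_vals :: "('a::real_inner \<Rightarrow> real) \<Rightarrow> ('a \<Rightarrow> 'a) \<Rightarrow> 'a set \<Rightarrow> real set" where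
  "mu_vals f g A =
     {2 / (gammaA g A x xs)^2 * (f xs - f x - g x \<bullet> (xs - x)) | x xs.
        x \<in> convex hull A \<and> xs \<in> convex hull A \<and> g x \<bullet> (xs - x) < 0}"

definition mu_const :: "('a::real_inner \<Rightarrow> real) \<Rightarrow> ('a \<Rightarrow> 'a) \<Rightarrow> 'a set \<Rightarrow> real" where
  "mu_const f g A = Inf (mu_vals f g A)"

end

theory Submission
  imports Defs
begin

text \<open>On a step that is not a drop step the exact line search does at least as well as any step
  size \<open>c \<in> [0, 1]\<close> along \<open>d\<^sub>t\<close>; for an away step and \<open>c > \<gamma>\<^sub>m\<^sub>a\<^sub>x\<close> this is convexity along the
  segment, the minimiser lying strictly inside \<open>[0, \<gamma>\<^sub>m\<^sub>a\<^sub>x]\<close>. The curvature constant then gives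
  \<open>h\<^sub>t\<^sub>+\<^sub>1 \<le> h\<^sub>t - c g\<^sub>t + c\<^sup>2 C\<^sub>f\<^sup>A / 2\<close> with \<open>g\<^sub>t = \<langle>-\<nabla>f(x\<^sub>t), d\<^sub>t\<rangle>\<close>. The choice between the FW and
  the away direction makes \<open>g\<^sub>t\<close> dominate the FW gap, hence \<open>h\<^sub>t\<close>, and half the pairwise gap
  \<open>\<langle>\<nabla>f(x\<^sub>t), v\<^sub>t - s\<^sub>t\<rangle>\<close>, while the definition of \<open>\<mu>\<^sub>f\<^sup>A\<close> applied at a minimiser bounds \<open>\<mu>\<^sub>f\<^sup>A h\<^sub>t\<close> by
  half the square of the pairwise gap. Optimising \<open>c\<close> yields the linear rate on good steps and the
  recursion \<open>h\<^sub>t\<^sub>+\<^sub>1 \<le> h\<^sub>t - h\<^sub>t\<^sup>2 / (2C)\<close>. Only FW steps add atoms to the active set and every drop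
  step removes one, so at most half of the steps are drop steps.\<close>

lemma convex_on_imp_above_gradient:
  fixes f :: "'a::real_normed_vector \<Rightarrow> real"
  assumes cvx: "convex_on U f" and "open U" "a \<in> U" "b \<in> U"
    and deriv: "(f has_derivative f') (at a)"
  shows "f a + f' (b - a) \<le> f b"
proof -
  define p where "p = (\<lambda>t::real. a + t *\<^sub>R (b - a))"
  define T where "T = p -` U"
  have p_affine: "p ((1 - u) * t1 + u * t2) = (1 - u) *\<^sub>R p t1 + u *\<^sub>R p t2" for u t1 t2
    unfolding p_def by (simp add: algebra_simps)
  have "open T"
    unfolding T_def p_def using \<open>open U\<close> by (intro continuous_open_vimage continuous_intros)
  have "convex T"
    unfolding convex_alt T_def
    using convex_on_imp_convex[OF cvx] p_affine by (auto simp: convex_alt)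
  have "convex_on T (f \<circ> p)"
    using convex_onD[OF cvx] p_affine
    by (intro convex_onI \<open>convex T\<close>) (auto simp: T_def)
  have T01: "0 \<in> T" "1 \<in> T" using assms(3,4) by (auto simp: T_def p_def)
  have "(p has_derivative (\<lambda>t. t *\<^sub>R (b - a))) (at 0)"
    unfolding p_def by (auto intro!: derivative_eq_intros)
  then have "((f \<circ> p) has_derivative (\<lambda>t. f' (t *\<^sub>R (b - a)))) (at 0)"
    using diff_chain_at deriv by (fastforce simp: p_def o_def)
  moreover have "(\<lambda>t. f' (t *\<^sub>R (b - a))) = (*) (f' (b - a))"
    using has_derivative_linear[OF deriv] by (auto simp: linear_scale fun_eq_iff)
  ultimately have "((f \<circ> p) has_field_derivative f' (b - a)) (at 0 within T)"
    unfolding has_field_derivative_def by (metis has_derivative_at_withinI)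
  from convex_on_imp_above_tangent[OF \<open>convex_on T (f \<circ> p)\<close> convex_connected[OF \<open>convex T\<close>]
      _ T01(2) this]
  show ?thesis using \<open>open T\<close> T01 by (simp add: interior_open p_def)
qed

lemma convex_on_line_le_beyond:
  assumes cvx: "convex_on U f" and "x + a *\<^sub>R d \<in> U" "x + c *\<^sub>R d \<in> U"
    and "a < b" "b < c" and le: "f (x + a *\<^sub>R d) \<le> f (x + b *\<^sub>R d)"
  shows "f (x + a *\<^sub>R d) \<le> f (x + c *\<^sub>R d)"
proof -
  define l where "l = (b - a) / (c - a)"
  have l: "0 < l" "l < 1" using assms(4,5) by (auto simp: l_def field_simps)
  have "(1 - l) *\<^sub>R (x + a *\<^sub>R d) + l *\<^sub>R (x + c *\<^sub>R d) = x + (a + l * (c - a)) *\<^sub>R d"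
    by (simp add: algebra_simps)
  also have "a + l * (c - a) = b" using assms(4,5) by (simp add: l_def)
  finally have "x + b *\<^sub>R d = (1 - l) *\<^sub>R (x + a *\<^sub>R d) + l *\<^sub>R (x + c *\<^sub>R d)" ..
  then have "f (x + b *\<^sub>R d) \<le> (1 - l) * f (x + a *\<^sub>R d) + l * f (x + c *\<^sub>R d)"
    using convex_onD[OF cvx, of l] l assms(2,3) by auto
  then have "l * f (x + a *\<^sub>R d) \<le> l * f (x + c *\<^sub>R d)" using le by (simp add: algebra_simps)
  then show ?thesis using l by simp
qed

lemma inner_le_on_convex_hull:
  fixes w :: "'a::real_inner"
  assumes "y \<in> convex hull S" "\<And>a. a \<in> S \<Longrightarrow> w \<bullet> a \<le> k"
  shows "w \<bullet> y \<le> k"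
proof -
  have "convex hull S \<subseteq> {z. w \<bullet> z \<le> k}"
    using assms(2) by (intro hull_minimal) (auto simp: convex_halfspace_le)
  then show ?thesis using assms(1) by auto
qed

lemma inner_ge_on_convex_hull:
  fixes w :: "'a::real_inner"
  assumes "y \<in> convex hull S" "\<And>a. a \<in> S \<Longrightarrow> k \<le> w \<bullet> a"
  shows "k \<le> w \<bullet> y"
  using inner_le_on_convex_hull[of y S "- w" "- k"] assms by simp

lemma card_Collect_less_Suc:
  "card {i. i < Suc t \<and> P i} = card {i. i < t \<and> P i} + (if P t then 1 else 0)"
proof -
  have "{i. i < Suc t \<and> P i} = (if P t then insert t {i. i < t \<and> P i} else {i. i < t \<and> P i})"
    by (auto simp: less_Suc_eq)
  then show ?thesis by simp
qed

lemma card_Collect_less_not_plus: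
  "card {i. i < t \<and> \<not> P i} + card {i. i < t \<and> P i} = t"
  by (induction t) (simp_all add: card_Collect_less_Suc)

lemma counted_geometric_decay:
  fixes h :: "nat \<Rightarrow> real"
  assumes mono: "\<And>t. h (Suc t) \<le> h t"
    and contract: "\<And>t. P t \<Longrightarrow> h (Suc t) \<le> (1 - \<rho>) * h t" and "\<rho> \<le> 1"
  shows "h t \<le> (1 - \<rho>) ^ card {i. i < t \<and> P i} * h 0"
proof (induction t)
  case (Suc t)
  show ?case
  proof (cases "P t")
    case True
    have "h (Suc t) \<le> (1 - \<rho>) * h t" using contract[OF True] .
    also have "\<dots> \<le> (1 - \<rho>) * ((1 - \<rho>) ^ card {i. i < t \<and> P i} * h 0)"
      using Suc \<open>\<rho> \<le> 1\<close> by (intro mult_left_mono) auto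
    finally show ?thesis using True by (simp add: card_Collect_less_Suc)
  qed (use Suc mono[of t] in \<open>simp add: card_Collect_less_Suc\<close>)
qed simp

lemma sublinear_recursion_step:
  fixes K n z :: real
  assumes "0 < K" "0 \<le> n" "0 \<le> z" "z \<le> 4 * K / (n + 4)"
  shows "z - z\<^sup>2 / (2 * K) \<le> 4 * K / (n + 5)"
proof -
  define a where "a = 4 * K / (n + 4)"
  have "a \<le> K" using assms(1,2) by (simp add: a_def field_simps)
  \<comment> \<open>\<open>z \<mapsto> z - z\<^sup>2 / (2 K)\<close> is increasing on \<open>[0, K]\<close>\<close>
  have "(a - a\<^sup>2 / (2 * K)) - (z - z\<^sup>2 / (2 * K)) = (a - z) * (2 * K - a - z) / (2 * K)"
    using assms(1) by (simp add: field_simps power2_eq_square)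
  also have "\<dots> \<ge> 0" using assms \<open>a \<le> K\<close> by (simp add: a_def)
  finally have "z - z\<^sup>2 / (2 * K) \<le> a - a\<^sup>2 / (2 * K)" by simp
  also have "\<dots> = 4 * K * (n + 2) / (n + 4)\<^sup>2"
    using assms(1,2) by (simp add: a_def power2_eq_square divide_simps) (simp add: algebra_simps)
  also have "\<dots> \<le> 4 * K / (n + 5)"
  proof -
    have "(n + 2) * (n + 5) \<le> (n + 4)\<^sup>2" using assms(2)
      by (simp add: power2_eq_square algebra_simps)
    then have "4 * K * ((n + 2) * (n + 5)) \<le> 4 * K * (n + 4)\<^sup>2"
      using assms(1) by (intro mult_left_mono) auto
    then show ?thesis using assms(2) by (simp add: field_simps)
  qed
  finally show ?thesis .
qed

lemma counted_sublinear_decay: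
  fixes h :: "nat \<Rightarrow> real"
  assumes nonneg: "\<And>t. 0 \<le> h t" and "h 0 \<le> K" and mono: "\<And>t. h (Suc t) \<le> h t"
    and progress: "\<And>t. P t \<Longrightarrow> h (Suc t) \<le> h t - (h t)\<^sup>2 / (2 * K)"
  shows "h t \<le> 4 * K / (real (card {i. i < t \<and> P i}) + 4)"
proof (induction t)
  case 0
  then show ?case using \<open>h 0 \<le> K\<close> by simp
next
  case (Suc t)
  define n where "n = real (card {i. i < t \<and> P i})"
  have IH: "h t \<le> 4 * K / (n + 4)" using Suc by (simp add: n_def)
  show ?case
  proof (cases "P t \<and> K \<noteq> 0")
    case True
    have "0 < K" using True nonneg[of 0] \<open>h 0 \<le> K\<close> by simp
    have "h (Suc t) \<le> h t - (h t)\<^sup>2 / (2 * K)" using progress True by simp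
    also have "\<dots> \<le> 4 * K / (n + 5)"
      using sublinear_recursion_step[OF \<open>0 < K\<close> _ nonneg IH] by (simp add: n_def)
    finally show ?thesis using True by (simp add: card_Collect_less_Suc n_def add_ac)
  next
    case False
    then have "h (Suc t) \<le> 4 * K / (n + 4)" using IH mono[of t] by auto
    also have "\<dots> \<le> 4 * K / (real (card {i. i < Suc t \<and> P i}) + 4)"
      using False IH nonneg[of t] by (auto simp: card_Collect_less_Suc n_def)
    finally show ?thesis .
  qed
qed

lemma quadratic_gap_bound:
  fixes \<mu> e r h :: real
  assumes "0 \<le> \<mu>" "r \<noteq> 0" "\<mu> * e\<^sup>2 \<le> 2 * r\<^sup>2 * (e - h)"
  shows "\<mu> * h \<le> r\<^sup>2 / 2"
proof -
  have "r\<^sup>2 * (2 * (\<mu> * h)) \<le> r\<^sup>2 * (2 * (\<mu> * e)) - \<mu> * (\<mu> * e\<^sup>2)"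
    using mult_left_mono[OF assms(3,1)] by (simp add: algebra_simps)
  also have "\<dots> \<le> r\<^sup>2 * r\<^sup>2"
    using zero_le_power2[of "r\<^sup>2 - \<mu> * e"] by (simp add: power2_eq_square algebra_simps)
  finally have "2 * (\<mu> * h) \<le> r\<^sup>2" by (rule mult_left_le_imp_le) (use assms(2) in simp)
  then show ?thesis by simp
qed

definition convex_weights :: "'a::real_vector set \<Rightarrow> ('a \<Rightarrow> real) \<Rightarrow> 'a \<Rightarrow> bool" where
  "convex_weights A \<beta> y \<longleftrightarrow>
     (\<forall>u. 0 \<le> \<beta> u) \<and> (\<forall>u. u \<notin> A \<longrightarrow> \<beta> u = 0) \<and> sum \<beta> A = 1 \<and> (\<Sum>u\<in>A. \<beta> u *\<^sub>R u) = y"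

lemma convex_weights_in_convex_hull:
  "finite A \<Longrightarrow> convex_weights A \<beta> y \<Longrightarrow> y \<in> convex hull A"
  by (auto simp: convex_weights_def convex_hull_finite)

lemma convex_weights_support: "convex_weights A \<beta> y \<Longrightarrow> 0 < \<beta> u \<Longrightarrow> u \<in> A"
  by (auto simp: convex_weights_def)

lemma convex_weights_le_one:
  "finite A \<Longrightarrow> convex_weights A \<beta> y \<Longrightarrow> \<beta> u \<le> 1"
  using member_le_sum[of u A \<beta>] by (cases "u \<in> A") (auto simp: convex_weights_def)

lemma convex_weights_unit:
  assumes "finite A" "convex_weights A \<beta> y" "\<beta> p = 1"
  shows "y = p"
proof -
  have p: "p \<in> A" and nonneg: "\<forall>u. 0 \<le> \<beta> u"
    using assms(2,3) by (auto simp: convex_weights_def)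
  have "sum \<beta> (A - {p}) = 0"
    using assms p sum.remove[OF assms(1) p, of \<beta>] by (simp add: convex_weights_def)
  then have "\<forall>u\<in>A - {p}. \<beta> u = 0" using assms(1) nonneg by (simp add: sum_nonneg_eq_0_iff)
  then have "(\<Sum>u\<in>A - {p}. \<beta> u *\<^sub>R u) = 0" by simp
  then show ?thesis
    using assms p sum.remove[OF assms(1) p, of "\<lambda>u. \<beta> u *\<^sub>R u"] by (simp add: convex_weights_def)
qed

lemma convex_weights_mix_vertex:
  assumes "finite A" "convex_weights A \<beta> y" "w \<in> A"
    and nonneg: "\<And>u. 0 \<le> l * \<beta> u + (if u = w then 1 - l else 0)"
  shows "convex_weights A (\<lambda>u. l * \<beta> u + (if u = w then 1 - l else 0)) (l *\<^sub>R y + (1 - l) *\<^sub>R w)"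
proof -
  have "(\<Sum>u\<in>A. (if u = w then 1 - l else 0) *\<^sub>R u) = (1 - l) *\<^sub>R w"
    using assms(1,3) by (simp add: if_distrib[of "\<lambda>c. c *\<^sub>R _"] sum.delta cong: if_cong)
  then show ?thesis
    using assms by (auto simp: convex_weights_def sum.distrib scaleR_add_left scaleR_sum_right
        simp flip: sum_distrib_left)
qed

lemma convex_weights_move:
  assumes "finite A" "convex_weights A \<beta> y" "p \<in> A" "q \<in> A" "0 \<le> a" "a \<le> \<beta> p"
  shows "y + a *\<^sub>R (q - p) \<in> convex hull A"
proof -
  define \<beta>' where "\<beta>' = (\<lambda>u. \<beta> u - (if u = p then a else 0) + (if u = q then a else 0))"
  have delta: "(\<Sum>u\<in>A. (if u = z then a else 0) *\<^sub>R u) = a *\<^sub>R z" if "z \<in> A" for z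
    using assms(1) that by (simp add: if_distrib[of "\<lambda>c. c *\<^sub>R _"] sum.delta cong: if_cong)
  have "convex_weights A \<beta>' (y + a *\<^sub>R (q - p))"
    using assms delta[of p] delta[of q]
    by (auto simp: convex_weights_def \<beta>'_def sum.distrib sum_subtractf scaleR_add_left
        scaleR_diff_left algebra_simps intro: add_nonneg_nonneg)
  then show ?thesis by (rule convex_weights_in_convex_hull[OF assms(1)])
qed

lemma convex_weights_supp_sets:
  assumes "finite A" "convex_weights A \<beta> y"
  shows "{u. 0 < \<beta> u} \<in> supp_sets A y"
proof -
  define S where "S = {u. 0 < \<beta> u}"
  have "S \<subseteq> A" using assms(2) by (force simp: S_def convex_weights_def)
  moreover have "\<forall>u\<in>A - S. \<beta> u = 0"
    using assms(2) by (auto simp: S_def convex_weights_def not_less intro: order.antisym)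
  ultimately have "sum \<beta> S = sum \<beta> A" "(\<Sum>u\<in>S. \<beta> u *\<^sub>R u) = (\<Sum>u\<in>A. \<beta> u *\<^sub>R u)"
    using assms(1) by (auto intro: sum.mono_neutral_left)
  then show ?thesis
    using assms(2) \<open>S \<subseteq> A\<close> by (auto simp: supp_sets_def proper_comb_def convex_weights_def S_def)
qed

lemma convex_hull_convex_weights:
  assumes "finite A" "y \<in> convex hull A"
  obtains \<beta> where "convex_weights A \<beta> y"
proof -
  obtain u where u: "\<forall>x\<in>A. 0 \<le> u x" "sum u A = 1" "(\<Sum>x\<in>A. u x *\<^sub>R x) = y"
    using assms by (auto simp: convex_hull_finite)
  have "convex_weights A (\<lambda>x. if x \<in> A then u x else 0) y"
    using u by (auto simp: convex_weights_def cong: sum.cong)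
  then show ?thesis by (rule that)
qed

lemma supp_setsD:
  assumes "S \<in> supp_sets A y" "finite A"
  shows "S \<subseteq> A" "finite S" "S \<noteq> {}" "y \<in> convex hull S"
proof -
  show "S \<subseteq> A" using assms(1) by (simp add: supp_sets_def)
  then show "finite S" using assms(2) finite_subset by blast
  obtain \<beta> where "\<forall>u\<in>S. 0 < \<beta> u" "sum \<beta> S = 1" "(\<Sum>u\<in>S. \<beta> u *\<^sub>R u) = y"
    using assms(1) by (auto simp: supp_sets_def proper_comb_def)
  then show "S \<noteq> {}" "y \<in> convex hull S"
    using \<open>finite S\<close> by (auto simp: convex_hull_finite intro!: exI[of _ \<beta>] less_imp_le)
qed

lemma supp_setsE:
  assumes "S \<in> supp_sets A y" "finite A"
  obtains \<beta> where "convex_weights A \<beta> y" "\<And>u. u \<in> S \<Longrightarrow> 0 < \<beta> u"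
proof -
  obtain \<beta> where \<beta>: "\<forall>u\<in>S. 0 < \<beta> u" "sum \<beta> S = 1" "(\<Sum>u\<in>S. \<beta> u *\<^sub>R u) = y"
    using assms(1) by (auto simp: supp_sets_def proper_comb_def)
  define \<beta>' where "\<beta>' u = (if u \<in> S then \<beta> u else 0)" for u
  have "S \<subseteq> A" using supp_setsD[OF assms] by simp
  then have "sum \<beta>' A = sum \<beta> S" "(\<Sum>u\<in>A. \<beta>' u *\<^sub>R u) = (\<Sum>u\<in>S. \<beta> u *\<^sub>R u)"
    using assms(2) by (simp_all add: \<beta>'_def sum.If_cases Int_absorb1 if_distrib[of "\<lambda>c. c *\<^sub>R _"]
        cong: if_cong)
  then have "convex_weights A \<beta>' y"
    using \<beta> \<open>S \<subseteq> A\<close> by (auto simp: convex_weights_def \<beta>'_def less_imp_le)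
  then show ?thesis by (rule that) (use \<beta> in \<open>simp add: \<beta>'_def\<close>)
qed

lemma fw_atom:
  assumes "finite A" "A \<noteq> {}"
  shows "fw_atom g A y \<in> A" "b \<in> A \<Longrightarrow> g y \<bullet> fw_atom g A y \<le> g y \<bullet> b"
proof -
  have "\<exists>a. a \<in> A \<and> (\<forall>b\<in>A. g y \<bullet> a \<le> g y \<bullet> b)"
    using arg_min_if_finite(1)[OF assms] arg_min_least[OF assms] by blast
  then have "fw_atom g A y \<in> A \<and> (\<forall>b\<in>A. g y \<bullet> fw_atom g A y \<le> g y \<bullet> b)"
    unfolding fw_atom_def by (rule someI_ex)
  then show "fw_atom g A y \<in> A" "b \<in> A \<Longrightarrow> g y \<bullet> fw_atom g A y \<le> g y \<bullet> b" by auto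
qed

lemma away_atom:
  assumes "finite S" "S \<noteq> {}"
  shows "away_atom g S y \<in> S" "u \<in> S \<Longrightarrow> g y \<bullet> u \<le> g y \<bullet> away_atom g S y"
proof -
  have "\<exists>a. a \<in> S \<and> (\<forall>u\<in>S. g y \<bullet> u \<le> g y \<bullet> a)"
    using arg_min_if_finite(1)[OF assms] arg_min_least[OF assms, of _ "\<lambda>u. - (g y \<bullet> u)"]
    by fastforce
  then have "away_atom g S y \<in> S \<and> (\<forall>u\<in>S. g y \<bullet> u \<le> g y \<bullet> away_atom g S y)"
    unfolding away_atom_def by (rule someI_ex)
  then show "away_atom g S y \<in> S" "u \<in> S \<Longrightarrow> g y \<bullet> u \<le> g y \<bullet> away_atom g S y" by auto
qed

lemma away_atom_ge:
  assumes "S \<in> supp_sets A y" "finite A"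
  shows "g y \<bullet> y \<le> g y \<bullet> away_atom g S y"
  using inner_le_on_convex_hull[OF supp_setsD(4)[OF assms]]
    away_atom(2)[OF supp_setsD(2,3)[OF assms]] by blast

lemma pw_away_atom:
  assumes "finite A" "y \<in> convex hull A"
  shows "\<exists>S\<in>supp_sets A y. pw_away_atom g A y = away_atom g S y"
    and "S \<in> supp_sets A y \<Longrightarrow> g y \<bullet> pw_away_atom g A y \<le> g y \<bullet> away_atom g S y"
proof -
  define V where "V = (\<lambda>S. away_atom g S y) ` supp_sets A y"
  obtain \<beta> where "convex_weights A \<beta> y" using convex_hull_convex_weights[OF assms] .
  then have "supp_sets A y \<noteq> {}" using convex_weights_supp_sets[OF assms(1)] by blast
  moreover have "finite (supp_sets A y)"
    using finite_subset[of "supp_sets A y" "Pow A"] assms(1) by (auto simp: supp_sets_def)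
  ultimately have "finite V" "V \<noteq> {}" by (auto simp: V_def)
  then have "\<exists>a. a \<in> V \<and> (\<forall>u\<in>V. g y \<bullet> a \<le> g y \<bullet> u)"
    using arg_min_if_finite(1) arg_min_least by metis
  then have "pw_away_atom g A y \<in> V \<and> (\<forall>u\<in>V. g y \<bullet> pw_away_atom g A y \<le> g y \<bullet> u)"
    unfolding pw_away_atom_def Let_def V_def[symmetric] by (rule someI_ex)
  then show "\<exists>S\<in>supp_sets A y. pw_away_atom g A y = away_atom g S y"
    and "S \<in> supp_sets A y \<Longrightarrow> g y \<bullet> pw_away_atom g A y \<le> g y \<bullet> away_atom g S y"
    by (auto simp: V_def)
qed

lemma pairwise_gap_ge:
  assumes "finite A" "y \<in> convex hull A" "z \<in> convex hull A"
  shows "g y \<bullet> (y - z) \<le> g y \<bullet> (pw_away_atom g A y - fw_atom g A y)"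
proof -
  have "A \<noteq> {}" using assms(2) by auto
  then have "g y \<bullet> fw_atom g A y \<le> g y \<bullet> z"
    using inner_ge_on_convex_hull[OF assms(3)] fw_atom(2)[OF assms(1)] by metis
  moreover have "g y \<bullet> y \<le> g y \<bullet> pw_away_atom g A y"
    using pw_away_atom(1)[OF assms(1,2), of g] away_atom_ge[OF _ assms(1)] by metis
  ultimately show ?thesis by (simp add: inner_diff_right)
qed

locale fw_problem =
  fixes A :: "'a::real_inner set" and f :: "'a \<Rightarrow> real" and g :: "'a \<Rightarrow> 'a" and U :: "'a set"
  assumes finA: "finite A" and neA: "A \<noteq> {}"
    and U: "open U" "minkowski3 (convex hull A) \<subseteq> U"
    and cvx: "convex_on U f"
    and grad: "\<forall>y\<in>U. (f has_derivative (\<lambda>h. g y \<bullet> h)) (at y)"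
    and Cfin: "bdd_above (curv_vals f g (convex hull A))"
begin

abbreviation D :: "'a set" where "D \<equiv> convex hull A"
abbreviation Cf :: real where "Cf \<equiv> curv_const f g D"
abbreviation mu :: real where "mu \<equiv> mu_const f g A"

lemma minkowski_in_U: "a \<in> D \<Longrightarrow> b \<in> D \<Longrightarrow> c \<in> D \<Longrightarrow> a + b - c \<in> U"
  using U(2) unfolding minkowski3_def by blast

lemma D_subset_U: "D \<subseteq> U"
  using minkowski_in_U[of y y y for y] by auto

lemma gradient_ineq: "a \<in> D \<Longrightarrow> b \<in> D \<Longrightarrow> f a + g a \<bullet> (b - a) \<le> f b"
  using convex_on_imp_above_gradient[OF cvx U(1)] grad D_subset_U by blast

lemma minimum_attained:
  obtains xopt where "xopt \<in> D" "(INF y\<in>D. f y) = f xopt" "\<And>y. y \<in> D \<Longrightarrow> f xopt \<le> f y"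
proof -
  have "continuous_on D f"
    using grad D_subset_U
    by (intro continuous_at_imp_continuous_on) (auto dest: has_derivative_continuous)
  then obtain xopt where "xopt \<in> D" "\<forall>y\<in>D. f xopt \<le> f y"
    using continuous_attains_inf[OF finite_imp_compact_convex_hull[OF finA]] neA by auto
  moreover then have "(INF y\<in>D. f y) = f xopt" by (intro cInf_eq_minimum) auto
  ultimately show ?thesis using that by blast
qed

lemma curvature_bound:
  assumes "a \<in> D" "b \<in> D" "c \<in> D" "0 < l" "l \<le> 1"
  shows "f (a + l *\<^sub>R (b - c)) \<le> f a + l * (g a \<bullet> (b - c)) + l\<^sup>2 * Cf / 2"
proof -
  have "2 / l\<^sup>2 * (f (a + l *\<^sub>R (b - c)) - f a - l * (g a \<bullet> (b - c))) \<in> curv_vals f g D"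
    unfolding curv_vals_def using assms by blast
  then have "2 / l\<^sup>2 * (f (a + l *\<^sub>R (b - c)) - f a - l * (g a \<bullet> (b - c))) \<le> Cf"
    unfolding curv_const_def by (rule cSup_upper[OF _ Cfin])
  then show ?thesis using assms(4) by (simp add: field_simps)
qed

lemma curv_const_nonneg: "0 \<le> Cf"
proof -
  obtain a where "a \<in> D" using neA hull_subset by fastforce
  from curvature_bound[OF this this this, of 1] show ?thesis by simp
qed

lemma mu_vals_nonneg: "z \<in> mu_vals f g A \<Longrightarrow> 0 \<le> z"
  unfolding mu_vals_def using gradient_ineq by fastforce

lemma mu_const_le:
  assumes "y \<in> D" "z \<in> D" "g y \<bullet> (z - y) < 0"
  shows "mu \<le> 2 / (gammaA g A y z)\<^sup>2 * (f z - f y - g y \<bullet> (z - y))"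
  unfolding mu_const_def
  by (rule cInf_lower[OF _ bdd_belowI[of _ 0, OF mu_vals_nonneg]])
    (use assms in \<open>auto simp: mu_vals_def\<close>)

lemma mu_const_nonneg: "mu_vals f g A \<noteq> {} \<Longrightarrow> 0 \<le> mu"
  unfolding mu_const_def by (rule cInf_greatest) (auto intro: mu_vals_nonneg)

text \<open>For \<open>x\<^sup>* = y + a (s\<^sub>f(y) - v\<^sub>f(y))\<close>, with \<open>a\<close> the weight of \<open>v\<^sub>f(y)\<close> in a proper representation
  of \<open>y\<close>, one has \<open>\<gamma>\<^sup>A(y, x\<^sup>*) = a\<close>, so the quotient defining \<open>\<mu>\<^sub>f\<^sup>A\<close> is one defining \<open>C\<^sub>f\<^sup>A\<close>.\<close>
lemma mu_const_le_curv_const: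
  assumes "mu_vals f g A \<noteq> {}"
  shows "mu \<le> Cf"
proof -
  obtain y z where y: "y \<in> D" "z \<in> D" "g y \<bullet> (z - y) < 0"
    using assms unfolding mu_vals_def by blast
  define s p where "s = fw_atom g A y" and "p = pw_away_atom g A y"
  define r where "r = g y \<bullet> (p - s)"
  have "0 < r"
    using pairwise_gap_ge[OF finA y(1,2), of g] y(3)
      by (simp add: r_def s_def p_def inner_diff_right)
  obtain S where S: "S \<in> supp_sets A y" "p = away_atom g S y"
    using pw_away_atom(1)[OF finA y(1), of g] by (auto simp: p_def)
  then have "p \<in> S" using away_atom(1) supp_setsD(2,3)[OF S(1) finA] by metis
  obtain \<beta> where \<beta>: "convex_weights A \<beta> y" "\<And>u. u \<in> S \<Longrightarrow> 0 < \<beta> u"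
    using supp_setsE[OF S(1) finA] by blast
  define a where "a = \<beta> p"
  have a: "0 < a" "a \<le> 1" using \<beta> \<open>p \<in> S\<close> convex_weights_le_one[OF finA] by (auto simp: a_def)
  have "p \<in> A" "s \<in> A" using \<open>p \<in> S\<close> supp_setsD(1)[OF S(1) finA] fw_atom(1)[OF finA neA]
    by (auto simp: s_def)
  define w where "w = y + a *\<^sub>R (s - p)"
  have "w \<in> D" unfolding w_def using convex_weights_move[OF finA \<beta>(1) \<open>p \<in> A\<close> \<open>s \<in> A\<close>] a
    by (simp add: a_def)
  have gw: "g y \<bullet> (w - y) = - (a * r)" by (simp add: w_def r_def inner_diff_right algebra_simps)
  have "gammaA g A y w = a"
    using \<open>0 < r\<close> gw by (simp add: gammaA_def r_def s_def p_def inner_diff_right field_simps)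
  then have "mu \<le> 2 / a\<^sup>2 * (f w - f y - g y \<bullet> (w - y))"
    using mu_const_le[OF y(1) \<open>w \<in> D\<close>] gw \<open>0 < r\<close> a by (simp add: mult_pos_pos)
  also have "\<dots> \<le> Cf"
    using curvature_bound[OF y(1) hull_inc[OF \<open>s \<in> A\<close>] hull_inc[OF \<open>p \<in> A\<close>] a] a(1) gw
    by (simp add: w_def r_def inner_diff_right field_simps)
  finally show ?thesis .
qed

end

locale afw = fw_problem A f g U
  for A :: "'a::real_inner set" and f :: "'a \<Rightarrow> real" and g :: "'a \<Rightarrow> 'a" and U :: "'a set" +
  fixes x s v d :: "nat \<Rightarrow> 'a" and \<alpha> :: "nat \<Rightarrow> 'a \<Rightarrow> real"
    and \<gamma> \<gamma>max :: "nat \<Rightarrow> real" and fw :: "nat \<Rightarrow> bool"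
  assumes init: "x 0 \<in> A" "\<alpha> 0 = (\<lambda>u. if u = x 0 then 1 else 0)"
    and s_min: "\<forall>t. s t \<in> A \<and> (\<forall>a\<in>A. g (x t) \<bullet> s t \<le> g (x t) \<bullet> a)"
    and v_max: "\<forall>t. \<alpha> t (v t) > 0 \<and> (\<forall>u. \<alpha> t u > 0 \<longrightarrow> g (x t) \<bullet> u \<le> g (x t) \<bullet> v t)"
    and fw_iff: "\<forall>t. fw t \<longleftrightarrow> (- g (x t)) \<bullet> (s t - x t) \<ge> (- g (x t)) \<bullet> (x t - v t)"
    and d_eq: "\<forall>t. d t = (if fw t then s t - x t else x t - v t)"
    and gmax_eq: "\<forall>t. \<gamma>max t = (if fw t then 1 else \<alpha> t (v t) / (1 - \<alpha> t (v t)))"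
    and line_search: "\<forall>t. 0 \<le> \<gamma> t \<and> \<gamma> t \<le> \<gamma>max t \<and>
                 (\<forall>c. 0 \<le> c \<and> c \<le> \<gamma>max t \<longrightarrow> f (x t + \<gamma> t *\<^sub>R d t) \<le> f (x t + c *\<^sub>R d t))"
    and step: "\<forall>t. x (Suc t) = x t + \<gamma> t *\<^sub>R d t"
    and weights: "\<forall>t. \<alpha> (Suc t) =
       (if fw t then (\<lambda>u. (1 - \<gamma> t) * \<alpha> t u + (if u = s t then \<gamma> t else 0))
        else (\<lambda>u. (1 + \<gamma> t) * \<alpha> t u - (if u = v t then \<gamma> t else 0)))"
begin

abbreviation drop_step :: "nat \<Rightarrow> bool" where "drop_step t \<equiv> \<not> fw t \<and> \<gamma> t = \<gamma>max t"

definition active :: "nat \<Rightarrow> 'a set" where "active t = {u. 0 < \<alpha> t u}"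

definition slope :: "nat \<Rightarrow> real" where "slope t = (- g (x t)) \<bullet> d t"

definition primal_gap :: "nat \<Rightarrow> real" where "primal_gap t = f (x t) - (INF y\<in>D. f y)"

lemma step_size: "0 \<le> \<gamma> t" "\<gamma> t \<le> \<gamma>max t"
  using line_search by auto

lemma line_search_min: "0 \<le> c \<Longrightarrow> c \<le> \<gamma>max t \<Longrightarrow> f (x (Suc t)) \<le> f (x t + c *\<^sub>R d t)"
  using line_search step by simp

lemma away_weight_lt_one:
  assumes "convex_weights A (\<alpha> t) (x t)" "\<not> fw t"
  shows "\<alpha> t (v t) < 1"
proof (rule ccontr)
  assume "\<not> \<alpha> t (v t) < 1"
  then have "\<alpha> t (v t) = 1" using convex_weights_le_one[OF finA assms(1)]
    by (simp add: order.antisym)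
  then have "x t = v t" by (rule convex_weights_unit[OF finA assms(1)])
  moreover have "v t \<in> A" using convex_weights_support[OF assms(1)] v_max by blast
  then have "g (x t) \<bullet> s t \<le> g (x t) \<bullet> v t" using s_min by blast
  ultimately have "fw t" using fw_iff by (simp add: inner_diff_right)
  with assms(2) show False by simp
qed

lemma weights_valid: "convex_weights A (\<alpha> t) (x t)"
proof (induction t)
  case 0
  have "(\<Sum>u\<in>A. (if u = x 0 then 1 else 0) *\<^sub>R u) = x 0"
    using finA init(1) by (simp add: if_distrib[of "\<lambda>c. c *\<^sub>R _"] sum.delta cong: if_cong)
  then show ?case using finA init by (simp add: convex_weights_def)
next
  case (Suc t)
  note \<gamma> = step_size[of t]
  have nonneg: "\<forall>u. 0 \<le> \<alpha> t u" using Suc by (simp add: convex_weights_def)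
  show ?case
  proof (cases "fw t")
    case True
    define l where "l = 1 - \<gamma> t"
    have "\<gamma> t \<le> 1" using \<gamma> gmax_eq True by simp
    then have "0 \<le> l * \<alpha> t u + (if u = s t then 1 - l else 0)" for u
      using nonneg \<gamma> by (simp add: l_def)
    from convex_weights_mix_vertex[OF finA Suc _ this] s_min
    have "convex_weights A (\<lambda>u. l * \<alpha> t u + (if u = s t then 1 - l else 0))
        (l *\<^sub>R x t + (1 - l) *\<^sub>R s t)" by blast
    moreover have "\<alpha> (Suc t) = (\<lambda>u. l * \<alpha> t u + (if u = s t then 1 - l else 0))"
      using weights True unfolding l_def by (auto simp: fun_eq_iff)
    moreover have "x (Suc t) = l *\<^sub>R x t + (1 - l) *\<^sub>R s t"
      using step d_eq True by (simp add: l_def algebra_simps)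
    ultimately show ?thesis by simp
  next
    case False
    define l where "l = 1 + \<gamma> t"
    have "v t \<in> A" using convex_weights_support[OF Suc] v_max by blast
    have "\<gamma> t * (1 - \<alpha> t (v t)) \<le> \<alpha> t (v t)"
      using \<gamma> gmax_eq False away_weight_lt_one[OF Suc False] by (simp add: pos_le_divide_eq)
    then have "0 \<le> l * \<alpha> t u + (if u = v t then 1 - l else 0)" for u
      using nonneg \<gamma> by (simp add: l_def algebra_simps)
    from convex_weights_mix_vertex[OF finA Suc \<open>v t \<in> A\<close> this]
    have "convex_weights A (\<lambda>u. l * \<alpha> t u + (if u = v t then 1 - l else 0))
        (l *\<^sub>R x t + (1 - l) *\<^sub>R v t)" .
    moreover have "\<alpha> (Suc t) = (\<lambda>u. l * \<alpha> t u + (if u = v t then 1 - l else 0))"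
      using weights False unfolding l_def by (auto simp: fun_eq_iff)
    moreover have "x (Suc t) = l *\<^sub>R x t + (1 - l) *\<^sub>R v t"
      using step d_eq False by (simp add: l_def algebra_simps)
    ultimately show ?thesis by simp
  qed
qed

lemma iterate_in_D: "x t \<in> D"
  using convex_weights_in_convex_hull[OF finA weights_valid] .

lemma active_supp_sets: "active t \<in> supp_sets A (x t)"
  unfolding active_def using convex_weights_supp_sets[OF finA weights_valid] .

lemma finite_active: "finite (active t)"
  using supp_setsD(2)[OF active_supp_sets finA] .

lemma v_active: "v t \<in> active t"
  using v_max by (simp add: active_def)

lemma active_fw_step:
  assumes "fw t"
  shows "active (Suc t) \<subseteq> insert (s t) (active t)"
proof
  fix u assume "u \<in> active (Suc t)"
  then have "0 < (1 - \<gamma> t) * \<alpha> t u + (if u = s t then \<gamma> t else 0)"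
    using weights assms by (simp add: active_def)
  moreover have "0 \<le> \<alpha> t u" using weights_valid by (simp add: convex_weights_def)
  ultimately show "u \<in> insert (s t) (active t)"
    by (cases "u = s t") (auto simp: active_def order_le_less)
qed

lemma active_away_step:
  assumes "\<not> fw t"
  shows "active (Suc t) \<subseteq> active t"
proof
  fix u assume "u \<in> active (Suc t)"
  then have "0 < (1 + \<gamma> t) * \<alpha> t u - (if u = v t then \<gamma> t else 0)"
    using weights assms by (simp add: active_def)
  moreover have "0 \<le> \<alpha> t u" "0 \<le> \<gamma> t"
    using weights_valid step_size by (auto simp: convex_weights_def)
  ultimately show "u \<in> active t"
    by (cases "u = v t") (auto simp: active_def order_le_less)
qed

lemma active_drop_step:
  assumes "drop_step t"
  shows "v t \<notin> active (Suc t)"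
proof -
  have "\<alpha> t (v t) < 1" using away_weight_lt_one[OF weights_valid] assms by simp
  then have "(1 + \<gamma> t) * \<alpha> t (v t) - \<gamma> t = 0"
    using assms gmax_eq by (simp add: field_simps)
  then show ?thesis using assms weights by (simp add: active_def)
qed

lemma card_active_step:
  "card (active (Suc t)) + (if drop_step t then 1 else 0)
    \<le> card (active t) + (if fw t then 1 else 0)"
proof (cases "fw t")
  case True
  then have "card (active (Suc t)) \<le> card (insert (s t) (active t))"
    using active_fw_step finite_active by (intro card_mono) auto
  also have "\<dots> \<le> card (active t) + 1" by (simp add: card_insert_if finite_active)
  finally show ?thesis using True by simp
next
  case False
  show ?thesis
  proof (cases "drop_step t")
    case True
    then have "active (Suc t) \<subseteq> active t - {v t}"
      using active_away_step active_drop_step by blast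
    then have "card (active (Suc t)) \<le> card (active t - {v t})"
      using finite_active by (intro card_mono) auto
    also have "\<dots> = card (active t) - 1" using v_active by simp
    finally have "card (active (Suc t)) \<le> card (active t) - 1" .
    moreover have "0 < card (active t)" using finite_active v_active card_gt_0_iff by blast
    ultimately show ?thesis using True by simp
  qed (use False active_away_step finite_active in \<open>simp add: card_mono\<close>)
qed

lemma card_active_plus_drops:
  "card (active t) + card {i. i < t \<and> drop_step i} \<le> 1 + card {i. i < t \<and> fw i}"
proof (induction t)
  case 0
  have "active 0 = {x 0}" using init by (auto simp: active_def)
  then show ?case by simp
next
  case (Suc t)
  then show ?case
    using card_active_step[of t] by (simp add: card_Collect_less_Suc split: if_splits)
qed

lemma drop_steps_at_most_half: "2 * card {i. i < t \<and> drop_step i} \<le> t"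
proof -
  have "0 < card (active t)" using finite_active v_active card_gt_0_iff by blast
  then have "card {i. i < t \<and> drop_step i} \<le> card {i. i < t \<and> fw i}"
    using card_active_plus_drops[of t] by simp
  moreover have "card {i. i < t \<and> drop_step i} \<le> card {i. i < t \<and> \<not> fw i}"
    by (rule card_mono) auto
  ultimately show ?thesis using card_Collect_less_not_plus[of t fw] by simp
qed

lemma v_in_D: "v t \<in> D"
  using convex_weights_support[OF weights_valid] v_max hull_inc by metis

lemma s_in_D: "s t \<in> D"
  using s_min hull_inc by metis

lemma value_decreases: "f (x (Suc t)) \<le> f (x t)"
  using line_search_min[of 0 t] step_size[of t] by simp

lemma line_search_le:
  assumes "\<not> drop_step t" "0 \<le> c" "c \<le> 1"
  shows "f (x (Suc t)) \<le> f (x t + c *\<^sub>R d t)"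
proof (cases "c \<le> \<gamma>max t")
  case True
  then show ?thesis using line_search_min assms(2) by simp
next
  case False
  then have away: "\<not> fw t" using gmax_eq assms(3) by auto
  then have "\<gamma> t < \<gamma>max t" using assms(1) step_size[of t] by simp
  have on_segment: "x t + r *\<^sub>R d t \<in> U" if "0 \<le> r" "r \<le> 1" for r
  proof -
    have "r *\<^sub>R x t + (1 - r) *\<^sub>R v t \<in> D"
      using convexD[OF convex_convex_hull iterate_in_D[of t] v_in_D[of t]] that by simp
    from minkowski_in_U[OF iterate_in_D[of t] this v_in_D[of t]] show ?thesis
      using away d_eq by (simp add: algebra_simps)
  qed
  have "f (x t + \<gamma> t *\<^sub>R d t) \<le> f (x t + \<gamma>max t *\<^sub>R d t)"
    using line_search_min[of "\<gamma>max t" t] step_size[of t] step by simp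
  then show ?thesis
    using convex_on_line_le_beyond[OF cvx on_segment on_segment \<open>\<gamma> t < \<gamma>max t\<close>] False assms(3)
      step_size[of t] step by simp
qed

lemma descent:
  assumes "\<not> drop_step t" "0 \<le> c" "c \<le> 1"
  shows "f (x (Suc t)) \<le> f (x t) - c * slope t + c\<^sup>2 * Cf / 2"
proof (cases "c = 0")
  case True
  then show ?thesis using value_decreases by simp
next
  case False
  then have "0 < c" using assms(2) by simp
  have "f (x t + c *\<^sub>R d t) \<le> f (x t) + c * (g (x t) \<bullet> d t) + c\<^sup>2 * Cf / 2"
  proof (cases "fw t")
    case True
    then show ?thesis
      using curvature_bound[OF iterate_in_D s_in_D iterate_in_D \<open>0 < c\<close> assms(3)] d_eq by simp
  next
    case False
    then show ?thesis
      using curvature_bound[OF iterate_in_D iterate_in_D v_in_D \<open>0 < c\<close> assms(3)] d_eq by simp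
  qed
  then show ?thesis using line_search_le[OF assms] by (simp add: slope_def)
qed

lemma primal_gap_nonneg: "0 \<le> primal_gap t"
proof -
  obtain xopt where "(INF y\<in>D. f y) = f xopt" "\<And>y. y \<in> D \<Longrightarrow> f xopt \<le> f y"
    using minimum_attained by blast
  then show ?thesis using iterate_in_D by (simp add: primal_gap_def)
qed

lemma primal_gap_decreases: "primal_gap (Suc t) \<le> primal_gap t"
  using value_decreases by (simp add: primal_gap_def)

lemma primal_gap_descent:
  "\<not> drop_step t \<Longrightarrow> 0 \<le> c \<Longrightarrow> c \<le> 1 \<Longrightarrow>
    primal_gap (Suc t) \<le> primal_gap t - c * slope t + c\<^sup>2 * Cf / 2"
  using descent[of t c] by (simp add: primal_gap_def)

lemma slope_ge_fw_gap: "g (x t) \<bullet> (x t - s t) \<le> slope t"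
  using fw_iff d_eq by (cases "fw t") (auto simp: slope_def inner_diff_right)

lemma slope_ge_half_away_gap: "g (x t) \<bullet> (v t - s t) \<le> 2 * slope t"
  using fw_iff d_eq by (cases "fw t") (auto simp: slope_def inner_diff_right)

lemma pairwise_gap_le_away_gap:
  "g (x t) \<bullet> (pw_away_atom g A (x t) - fw_atom g A (x t)) \<le> g (x t) \<bullet> (v t - s t)"
proof -
  have "g (x t) \<bullet> fw_atom g A (x t) = g (x t) \<bullet> s t"
    using fw_atom[OF finA neA, where g = g and y = "x t"] s_min by (meson order.antisym)
  moreover have "g (x t) \<bullet> pw_away_atom g A (x t) \<le> g (x t) \<bullet> away_atom g (active t) (x t)"
    using pw_away_atom(2)[OF finA iterate_in_D active_supp_sets] .
  moreover have "g (x t) \<bullet> away_atom g (active t) (x t) \<le> g (x t) \<bullet> v t"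
  proof -
    have "away_atom g (active t) (x t) \<in> active t" using away_atom(1)[OF finite_active] v_active
      by blast
    then show ?thesis using v_max by (simp add: active_def)
  qed
  ultimately show ?thesis by (simp add: inner_diff_right)
qed

lemma primal_gap_le_slope: "primal_gap t \<le> slope t"
proof -
  obtain xopt where xopt: "xopt \<in> D" "(INF y\<in>D. f y) = f xopt"
    using minimum_attained by blast
  have "primal_gap t \<le> g (x t) \<bullet> (x t - xopt)"
    using gradient_ineq[OF iterate_in_D[of t] xopt(1)] xopt(2)
    by (simp add: primal_gap_def inner_diff_right)
  also have "\<dots> \<le> g (x t) \<bullet> (x t - s t)"
    using inner_ge_on_convex_hull[OF xopt(1), where w = "g (x t)" and k = "g (x t) \<bullet> s t"] s_min
    by (simp add: inner_diff_right)
  also have "\<dots> \<le> slope t" by (rule slope_ge_fw_gap)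
  finally show ?thesis .
qed

text \<open>The definition of \<open>\<mu>\<^sub>f\<^sup>A\<close> is applied at \<open>x\<^sup>*\<close>, where \<open>\<gamma>\<^sup>A = e / r\<close> with \<open>e\<close> the
  linearised gap to the minimiser and \<open>r\<close> the pairwise gap; AM-GM then removes \<open>e\<close>.\<close>
lemma mu_primal_gap_le:
  assumes "0 < primal_gap t"
  shows "mu_vals f g A \<noteq> {}" "mu * primal_gap t \<le> 2 * (slope t)\<^sup>2"
proof -
  define y where "y = x t"
  obtain xopt where xopt: "xopt \<in> D" "(INF y\<in>D. f y) = f xopt"
    using minimum_attained by blast
  define e r where "e = g y \<bullet> (y - xopt)"
    and "r = g y \<bullet> (pw_away_atom g A y - fw_atom g A y)"
  have y: "y \<in> D" using iterate_in_D by (simp add: y_def)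
  have "primal_gap t \<le> e"
    using gradient_ineq[OF y xopt(1)] xopt(2)
      by (simp add: primal_gap_def y_def e_def inner_diff_right)
  then have "0 < e" using assms by simp
  have "e \<le> r" using pairwise_gap_ge[OF finA y xopt(1)] by (simp add: e_def r_def)
  have descent_dir: "g y \<bullet> (xopt - y) < 0"
    using \<open>0 < e\<close> by (simp add: e_def inner_diff_right)
  then show "mu_vals f g A \<noteq> {}" using y xopt(1) unfolding mu_vals_def by blast
  then have "0 \<le> mu" by (rule mu_const_nonneg)
  have "gammaA g A y xopt = e / r"
    by (simp add: gammaA_def e_def r_def inner_diff_right)
  moreover have "f xopt - f y - g y \<bullet> (xopt - y) = e - primal_gap t"
    using xopt(2) by (simp add: primal_gap_def y_def e_def inner_diff_right)
  ultimately have "mu \<le> 2 / (e / r)\<^sup>2 * (e - primal_gap t)"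
    using mu_const_le[OF y xopt(1) descent_dir] by simp
  then have "mu * e\<^sup>2 \<le> 2 * r\<^sup>2 * (e - primal_gap t)"
    using \<open>0 < e\<close> by (simp add: power_divide field_simps)
  then have "mu * primal_gap t \<le> r\<^sup>2 / 2"
    using quadratic_gap_bound[OF \<open>0 \<le> mu\<close>] \<open>0 < e\<close> \<open>e \<le> r\<close> by simp
  also have "\<dots> \<le> (2 * slope t)\<^sup>2 / 2"
    using pairwise_gap_le_away_gap[of t] slope_ge_half_away_gap[of t] \<open>0 < e\<close> \<open>e \<le> r\<close>
    by (intro divide_right_mono power_mono) (auto simp: r_def y_def)
  finally show "mu * primal_gap t \<le> 2 * (slope t)\<^sup>2" by (simp add: power_mult_distrib)
qed

lemma non_drop_step_contraction:
  assumes "\<not> drop_step t"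
  shows "primal_gap (Suc t) \<le> (1 - mu / (4 * Cf)) * primal_gap t"
proof (cases "0 < primal_gap t \<and> Cf \<noteq> 0")
  case False
  then have "primal_gap t = 0 \<or> mu / (4 * Cf) = 0" using primal_gap_nonneg[of t] by auto
  then show ?thesis using primal_gap_decreases[of t] by auto
next
  case True
  define h G where "h = primal_gap t" and "G = slope t"
  have "0 < h" "0 < Cf" using True curv_const_nonneg by (auto simp: h_def)
  have "0 \<le> mu" "mu \<le> Cf"
    using mu_primal_gap_le(1) True mu_const_nonneg mu_const_le_curv_const by auto
  have "mu * h \<le> 2 * G\<^sup>2" "h \<le> G"
    using mu_primal_gap_le(2) True primal_gap_le_slope by (auto simp: h_def G_def)
  show ?thesis
  proof (cases "G \<le> Cf")
    case True
    have "primal_gap (Suc t) \<le> h - (G / Cf) * G + (G / Cf)\<^sup>2 * Cf / 2"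
      using primal_gap_descent[OF assms, of "G / Cf"] True \<open>0 < h\<close> \<open>h \<le> G\<close> \<open>0 < Cf\<close>
      by (simp add: h_def G_def)
    also have "\<dots> = h - G\<^sup>2 / (2 * Cf)"
      using \<open>0 < Cf\<close> by (simp add: field_simps power2_eq_square)
    also have "\<dots> \<le> (1 - mu / (4 * Cf)) * h"
      using \<open>mu * h \<le> 2 * G\<^sup>2\<close> \<open>0 < Cf\<close> by (simp add: field_simps)
    finally show ?thesis by (simp add: h_def)
  next
    case False
    have "primal_gap (Suc t) \<le> h - G + Cf / 2"
      using primal_gap_descent[OF assms, of 1] by (simp add: h_def G_def)
    also have "\<dots> \<le> (1 - 1 / 4) * h" using False \<open>h \<le> G\<close> \<open>0 < h\<close> by simp
    also have "\<dots> \<le> (1 - mu / (4 * Cf)) * h"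
      using \<open>mu \<le> Cf\<close> \<open>0 < Cf\<close> \<open>0 < h\<close> by (intro mult_right_mono) (auto simp: field_simps)
    finally show ?thesis by (simp add: h_def)
  qed
qed

lemma primal_gap_le_initial: "primal_gap t \<le> primal_gap 0"
  using lift_Suc_antimono_le[of primal_gap 0 t] primal_gap_decreases by simp

lemma non_drop_step_sublinear:
  assumes "\<not> drop_step t"
  shows "primal_gap (Suc t) \<le> primal_gap t - (primal_gap t)\<^sup>2 / (2 * (2 * Cf + primal_gap 0))"
proof (cases "primal_gap t = 0")
  case True
  then show ?thesis using primal_gap_decreases[of t] by simp
next
  case False
  define h K where "h = primal_gap t" and "K = 2 * Cf + primal_gap 0"
  have "0 < h" "h \<le> K"
    using False primal_gap_nonneg[of t] primal_gap_le_initial[of t] curv_const_nonneg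
    by (auto simp: h_def K_def)
  define c where "c = h / K"
  have c: "0 \<le> c" "c \<le> 1" using \<open>0 < h\<close> \<open>h \<le> K\<close> by (auto simp: c_def)
  have "Cf \<le> K / 2" using primal_gap_nonneg[of 0] by (simp add: K_def)
  have "primal_gap (Suc t) \<le> h - c * slope t + c\<^sup>2 * Cf / 2"
    using primal_gap_descent[OF assms c] by (simp add: h_def)
  also have "\<dots> \<le> h - c * h + c\<^sup>2 * (K / 2) / 2"
    using primal_gap_le_slope[of t] \<open>Cf \<le> K / 2\<close> c
    by (intro add_mono diff_mono mult_left_mono divide_right_mono) (auto simp: h_def)
  also have "\<dots> = h - 3 / 4 * h\<^sup>2 / K"
    using \<open>0 < h\<close> \<open>h \<le> K\<close> by (simp add: c_def field_simps power2_eq_square)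
  also have "\<dots> \<le> h - h\<^sup>2 / (2 * K)"
    using \<open>0 < h\<close> \<open>h \<le> K\<close> by (simp add: field_simps)
  finally show ?thesis by (simp add: h_def K_def)
qed

lemma linear_convergence:
  "primal_gap t \<le> primal_gap 0 * exp (- (1/2) * (mu / (4 * Cf)) * real t)"
proof (cases "\<exists>t'. 0 < primal_gap t'")
  case False
  then have "primal_gap t = 0" "primal_gap 0 = 0" using primal_gap_nonneg
    by (meson order.antisym not_le)+
  then show ?thesis by simp
next
  case True
  define \<rho> k where "\<rho> = mu / (4 * Cf)" and "k = card {i. i < t \<and> \<not> drop_step i}"
  have "mu_vals f g A \<noteq> {}" using True mu_primal_gap_le(1) by blast
  then have "0 \<le> mu" "mu \<le> Cf" using mu_const_nonneg mu_const_le_curv_const by auto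
  then have "0 \<le> \<rho>" "\<rho> \<le> 1"
    using curv_const_nonneg by (cases "Cf = 0"; simp add: \<rho>_def field_simps)+
  have "primal_gap t \<le> (1 - \<rho>) ^ k * primal_gap 0"
    using counted_geometric_decay[of primal_gap "\<lambda>i. \<not> drop_step i" \<rho>] primal_gap_decreases
      non_drop_step_contraction \<open>\<rho> \<le> 1\<close> by (simp add: \<rho>_def k_def)
  also have "(1 - \<rho>) ^ k \<le> exp (- \<rho>) ^ k"
    using \<open>\<rho> \<le> 1\<close> exp_ge_add_one_self[of "- \<rho>"] by (intro power_mono) auto
  also have "\<dots> = exp (- \<rho> * real k)" by (simp add: exp_of_nat_mult[symmetric] mult.commute)
  also have "\<dots> \<le> exp (- (1/2) * \<rho> * real t)"
  proof -
    have "real t \<le> 2 * real k"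
      using drop_steps_at_most_half[of t] card_Collect_less_not_plus[of t drop_step]
        by (simp add: k_def)
    from mult_left_mono[OF this \<open>0 \<le> \<rho>\<close>] show ?thesis by simp
  qed
  finally show ?thesis
    using primal_gap_nonneg[of 0] by (simp add: \<rho>_def mult.commute mult_right_mono)
qed

end

theorem theorem1:
  fixes A :: "'a::euclidean_space set" and f :: "'a \<Rightarrow> real" and g :: "'a \<Rightarrow> 'a"
    and U :: "'a set"
    and x s v d :: "nat \<Rightarrow> 'a" and \<alpha> :: "nat \<Rightarrow> 'a \<Rightarrow> real"
    and \<gamma> \<gamma>max :: "nat \<Rightarrow> real" and fw :: "nat \<Rightarrow> bool"
  assumes finA: "finite A" and neA: "A \<noteq> {}"
    and U: "open U" "minkowski3 (convex hull A) \<subseteq> U"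
    and cvx: "convex_on U f"
    and grad: "\<forall>y\<in>U. (f has_derivative (\<lambda>h. g y \<bullet> h)) (at y)"
    and Cfin: "bdd_above (curv_vals f g (convex hull A))"
    and init: "x 0 \<in> A" "\<alpha> 0 = (\<lambda>u. if u = x 0 then 1 else 0)"
    and s_def: "\<forall>t. s t \<in> A \<and> (\<forall>a\<in>A. g (x t) \<bullet> s t \<le> g (x t) \<bullet> a)"
    and v_def: "\<forall>t. \<alpha> t (v t) > 0 \<and> (\<forall>u. \<alpha> t u > 0 \<longrightarrow> g (x t) \<bullet> u \<le> g (x t) \<bullet> v t)"
    and fw_def: "\<forall>t. fw t \<longleftrightarrow> (- g (x t)) \<bullet> (s t - x t) \<ge> (- g (x t)) \<bullet> (x t - v t)"
    and d_def: "\<forall>t. d t = (if fw t then s t - x t else x t - v t)"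
    and gmax_def: "\<forall>t. \<gamma>max t = (if fw t then 1 else \<alpha> t (v t) / (1 - \<alpha> t (v t)))"
    and linesearch: "\<forall>t. 0 \<le> \<gamma> t \<and> \<gamma> t \<le> \<gamma>max t \<and>
                 (\<forall>c. 0 \<le> c \<and> c \<le> \<gamma>max t \<longrightarrow> f (x t + \<gamma> t *\<^sub>R d t) \<le> f (x t + c *\<^sub>R d t))"
    and step: "\<forall>t. x (Suc t) = x t + \<gamma> t *\<^sub>R d t"
    and weights: "\<forall>t. \<alpha> (Suc t) =
       (if fw t then (\<lambda>u. (1 - \<gamma> t) * \<alpha> t u + (if u = s t then \<gamma> t else 0))
        else (\<lambda>u. (1 + \<gamma> t) * \<alpha> t u - (if u = v t then \<gamma> t else 0)))"
  defines "h \<equiv> \<lambda>t. f (x t) - (INF y\<in>convex hull A. f y)"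
    and "Cf \<equiv> curv_const f g (convex hull A)"
    and "\<rho> \<equiv> mu_const f g A / (4 * curv_const f g (convex hull A))"
    and "dropstep \<equiv> \<lambda>t. \<not> fw t \<and> \<gamma> t = \<gamma>max t"
  shows "(\<forall>t. \<gamma> t < \<gamma>max t \<longrightarrow> h (Suc t) \<le> (1 - \<rho>) * h t)
       \<and> (\<forall>t. h (Suc t) \<le> h t)
       \<and> (\<forall>t. 2 * card {i. i < t \<and> dropstep i} \<le> t)
       \<and> (\<forall>t. h t \<le> h 0 * exp (- (1/2) * \<rho> * real t))
       \<and> (\<forall>t. h t \<le> 4 * (2 * Cf + h 0) / (real (card {i. i < t \<and> \<not> dropstep i}) + 4))"
proof -
  interpret afw A f g U x s v d \<alpha> \<gamma> \<gamma>max fw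
    by unfold_locales (fact assms)+
  have h: "h = primal_gap" by (simp add: h_def primal_gap_def fun_eq_iff)
  have "primal_gap t \<le> 4 * (2 * Cf + primal_gap 0) /
      (real (card {i. i < t \<and> \<not> drop_step i}) + 4)" for t
    using curv_const_nonneg primal_gap_nonneg primal_gap_decreases non_drop_step_sublinear
    by (intro counted_sublinear_decay) (auto simp: Cf_def)
  then show ?thesis
    unfolding h \<rho>_def dropstep_def
    using non_drop_step_contraction primal_gap_decreases drop_steps_at_most_half linear_convergence
    by auto
qed

end
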